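(* Let $K$ be a positive integer and $\ell$ an integer with $0\le\ell\le 2K$ and $K\equiv \ell \pmod 2$. Then \[ C_{K,\ell}^{2K}(q)=\frac{q^{s(K,\ell,2K)}}{J_{1}^3}\, f_{K+1,K+1,1}\big(q^{1+\frac{1}{2}(K+\ell)},q^{1-\frac{1}{2}(K-\ell)},q\big). \]
   Context: Let $q=e^{2\pi i\tau}$ with $\operatorname{Im}\tau>0$, and for real $\alpha$ put $q^{\alpha}:=e^{2\pi i\alpha\tau}$. For $x\in\mathbb{C}^*$, $j(x;q):=\sum_{n\in\mathbb{Z}}(-1)^nq^{n(n-1)/2}x^n$, and $J_1:=\prod_{i\ge1}(1-q^i)$. For positive integers $a,b,c$ and $x,y\in\mathbb{C}^*$, the Hecke-type double-sum is $f_{a,b,c}(x,y,q):=\Big(\sum_{r,s\ge0}-\sum_{r,s<0}\Big)(-1)^{r+s}x^ry^sq^{a\binom{r}{2}+brs+c\binom{s}{2}}$. For a positive integer $N$ and integers $m,\ell$ with $0\le\ell\le N$, $m\equiv\ell\pmod 2$, put $s(m,\ell,N):=-\frac18+\frac{(\ell+1)^2}{4(N+2)}-\frac{m^2}{4N}$. The level-$N$ $A_1^{(1)}$ string function is given by $C_{m,\ell}^{N}(q)=\dfrac{q^{s(m,\ell,N)}}{J_1^3}\, f_{1,1+N,1}\big(q^{1+\frac12(m+\ell)},q^{1-\frac12(m-\ell)},q\big)$. *)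

theory Defs
  imports "HOL-Analysis.Analysis"
begin

definition qpow :: "complex \<Rightarrow> real \<Rightarrow> complex" where
  "qpow \<tau> \<alpha> = exp (2 * of_real pi * \<i> * of_real \<alpha> * \<tau>)"

definition J1 :: "complex \<Rightarrow> complex" where
  "J1 \<tau> = (\<Prod>i. 1 - qpow \<tau> 1 ^ (Suc i))"

definition hecke_f :: "int \<Rightarrow> int \<Rightarrow> int \<Rightarrow> complex \<Rightarrow> complex \<Rightarrow> complex \<Rightarrow> complex" where
  "hecke_f a b c x y \<tau> =
     (let t = (\<lambda>(r::int, s::int). (-1) powi (r + s) * x powi r * y powi s *
                qpow \<tau> (of_int (a * (r * (r - 1) div 2) + b * r * s + c * (s * (s - 1) div 2))))
      in infsum t {(r, s). r \<ge> 0 \<and> s \<ge> 0} - infsum t {(r, s). r < 0 \<and> s < 0})"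

definition s_exp :: "int \<Rightarrow> int \<Rightarrow> int \<Rightarrow> real" where
  "s_exp m l N = - 1/8 + (of_int l + 1)^2 / (4 * of_int (N + 2)) - (of_int m)^2 / (4 * of_int N)"

definition string_fn :: "int \<Rightarrow> int \<Rightarrow> int \<Rightarrow> complex \<Rightarrow> complex" where
  "string_fn m l N \<tau> = qpow \<tau> (s_exp m l N) / (J1 \<tau>) ^ 3 *
     hecke_f 1 (1 + N) 1 (qpow \<tau> (1 + of_int (m + l) / 2)) (qpow \<tau> (1 - of_int (m - l) / 2)) \<tau>"

end

theory Submission
  imports Defs
begin

text \<open>Write the index (r, s) of f_{1,1+2K,1} as (n, m + n) if r \<le> s and as (m + n + 1, n)
  otherwise; it then corresponds to the index (2n, m) resp. (2n + 1, m) of f_{K+1,K+1,1}. For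
  x = q^\<alpha>, y = q^\<beta> with \<alpha> - \<beta> = K the two summands agree term by term, and the
  substitution maps each of the two quadrants bijectively onto itself (its inverse sends the
  diagonal r = s to the even branch in the nonnegative quadrant and to the odd branch in the
  negative one), so the two double sums are rearrangements of each other.\<close>

lemma qpow_add: "qpow \<tau> (a + b) = qpow \<tau> a * qpow \<tau> b"
  unfolding qpow_def by (simp add: exp_add[symmetric] algebra_simps)

lemma qpow_power_int: "qpow \<tau> a powi r = qpow \<tau> (a * of_int r)"
  unfolding qpow_def by (simp add: exp_power_int algebra_simps)

lemma of_int_binomial2: "real_of_int (r * (r - 1) div 2) = of_int r * (of_int r - 1) / 2"
proof -
  have "r * (r - 1) = 2 * (r * (r - 1) div 2)" by simp
  then have "real_of_int (r * (r - 1)) = 2 * real_of_int (r * (r - 1) div 2)"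
    by (metis of_int_mult of_int_numeral)
  then show ?thesis by simp
qed

definition hecke_term :: "int \<Rightarrow> int \<Rightarrow> int \<Rightarrow> real \<Rightarrow> real \<Rightarrow> complex \<Rightarrow> int \<times> int \<Rightarrow> complex" where
  "hecke_term a b c \<alpha> \<beta> \<tau> = (\<lambda>(r, s). (-1) powi (r + s) * qpow \<tau> (\<alpha> * r + \<beta> * s
      + a * r * (r - 1) / 2 + b * r * s + c * s * (s - 1) / 2))"

lemma hecke_f_qpow:
  "hecke_f a b c (qpow \<tau> \<alpha>) (qpow \<tau> \<beta>) \<tau> =
     infsum (hecke_term a b c \<alpha> \<beta> \<tau>) {(r, s). r \<ge> 0 \<and> s \<ge> 0}
   - infsum (hecke_term a b c \<alpha> \<beta> \<tau>) {(r, s). r < 0 \<and> s < 0}"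
proof -
  have "(\<lambda>(r::int, s::int). (-1) powi (r + s) * qpow \<tau> \<alpha> powi r * qpow \<tau> \<beta> powi s *
          qpow \<tau> (of_int (a * (r * (r - 1) div 2) + b * r * s + c * (s * (s - 1) div 2))))
        = hecke_term a b c \<alpha> \<beta> \<tau>"
    by (auto simp: hecke_term_def qpow_power_int qpow_add[symmetric] of_int_binomial2
        fun_eq_iff mult.assoc add.assoc)
  then show ?thesis unfolding hecke_f_def Let_def by simp
qed

definition parity_split :: "int \<times> int \<Rightarrow> int \<times> int" where
  "parity_split = (\<lambda>(a, m). if even a then (a div 2, m + a div 2)
                            else (m + a div 2 + 1, a div 2))"

lemma hecke_term_parity_split:
  assumes "\<alpha> - \<beta> = of_int K"
  shows "hecke_term 1 (1 + 2 * K) 1 \<alpha> \<beta> \<tau> (parity_split p) = hecke_term (K + 1) (K + 1) 1 \<alpha> \<beta> \<tau> p"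
proof -
  obtain a m where p: "p = (a, m)" by fastforce
  have \<alpha>: "\<alpha> = \<beta> + K" using assms by simp
  obtain n where "a = 2 * n \<or> a = 2 * n + 1" by (metis evenE oddE)
  then show ?thesis
  proof
    assume a: "a = 2 * n"
    then have split: "parity_split (a, m) = (n, m + n)" by (simp add: parity_split_def)
    show ?thesis
      unfolding p split hecke_term_def prod.case
      by (intro arg_cong2[where f = "(*)"] arg_cong[where f = "qpow \<tau>"])
        (simp_all add: a \<alpha> field_simps)
  next
    assume a: "a = 2 * n + 1"
    then have split: "parity_split (a, m) = (m + n + 1, n)" by (simp add: parity_split_def)
    show ?thesis
      unfolding p split hecke_term_def prod.case
      by (intro arg_cong2[where f = "(*)"] arg_cong[where f = "qpow \<tau>"])
        (simp_all add: a \<alpha> field_simps)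
  qed
qed

lemma bij_betw_parity_split_nonneg:
  "bij_betw parity_split {(r, s). r \<ge> 0 \<and> s \<ge> 0} {(r, s). r \<ge> 0 \<and> s \<ge> 0}"
  by (rule bij_betw_byWitness[where f' = "\<lambda>(r, s). if r \<le> s then (2 * r, s - r) else (2 * s + 1, r - s - 1)"])
    (auto simp: parity_split_def split: if_splits elim!: oddE; presburger)+

lemma bij_betw_parity_split_neg:
  "bij_betw parity_split {(r, s). r < 0 \<and> s < 0} {(r, s). r < 0 \<and> s < 0}"
  by (rule bij_betw_byWitness[where f' = "\<lambda>(r, s). if s < r then (2 * r, s - r) else (2 * s + 1, r - s - 1)"])
    (auto simp: parity_split_def split: if_splits elim!: oddE; presburger)+

lemma hecke_f_level_change:
  assumes "\<alpha> - \<beta> = of_int K"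
  shows "hecke_f 1 (1 + 2 * K) 1 (qpow \<tau> \<alpha>) (qpow \<tau> \<beta>) \<tau> =
         hecke_f (K + 1) (K + 1) 1 (qpow \<tau> \<alpha>) (qpow \<tau> \<beta>) \<tau>"
proof -
  have reindex: "hecke_term (K + 1) (K + 1) 1 \<alpha> \<beta> \<tau> = (\<lambda>p. hecke_term 1 (1 + 2 * K) 1 \<alpha> \<beta> \<tau> (parity_split p))"
    using hecke_term_parity_split[OF assms] by simp
  show ?thesis
    unfolding hecke_f_qpow reindex
      infsum_reindex_bij_betw[OF bij_betw_parity_split_nonneg]
      infsum_reindex_bij_betw[OF bij_betw_parity_split_neg] ..
qed

theorem corollary1p3:
  fixes K l :: int and \<tau> :: complex
  assumes "Im \<tau> > 0" and "K > 0" and "0 \<le> l" and "l \<le> 2 * K" and "K mod 2 = l mod 2"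
  shows "string_fn K l (2 * K) \<tau> =
    qpow \<tau> (s_exp K l (2 * K)) / (J1 \<tau>) ^ 3 *
    hecke_f (K + 1) (K + 1) 1 (qpow \<tau> (1 + of_int (K + l) / 2)) (qpow \<tau> (1 - of_int (K - l) / 2)) \<tau>"
proof -
  have "(1 + real_of_int (K + l) / 2) - (1 - real_of_int (K - l) / 2) = of_int K"
    by (simp add: field_simps)
  from hecke_f_level_change[OF this] show ?thesis
    unfolding string_fn_def by simp
qed

end
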